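(* Let $A \in \mathbb{R}^{n \times r}$, $B \in \mathbb{R}^{r \times n}$, $s=\mathrm{rank}(A)$, and for $\kappa\in\mathbb{R}^r_+$ let $f_\kappa\colon\mathbb{R}^n_+\to\mathbb{R}^n$, $f_\kappa(x)=A_\kappa x^B$. The following are equivalent: (inj) $f_\kappa$ is injective with respect to $\mathrm{im}(A)$, for all $\kappa \in \mathbb{R}^r_+$; (min) for all $I\subseteq [n]$, $J\subseteq [r]$ of cardinality $s$, the product $\det(A_{I,J}) \det(B_{J,I})$ either is zero or has the same sign as all other nonzero such products, and at least one such product is nonzero.
   Context: $\mathbb{R}_+$ denotes the strictly positive reals. $(x^B)_j=\prod_i x_i^{b_{ji}}$ (real exponents), $A_\kappa=A\,\mathrm{diag}(\kappa)$, $[n]=\{1,\dots,n\}$, $M_{K,L}$ is the submatrix with rows in $K$ and columns in $L$. A function $g$ on $\mathbb{R}^n_+$ is injective with respect to $S$ if $x,y\in\mathbb{R}^n_+$, $x\ne y$, $x-y\in S$ imply $g(x)\neq g(y)$. *)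

theory Defs
  imports Complex_Main "Jordan_Normal_Form.DL_Rank_Submatrix"
begin

definition pos_vecs :: "nat \<Rightarrow> real vec set" where
  "pos_vecs n = {x \<in> carrier_vec n. \<forall>i<n. x $ i > 0}"

definition mon_vec :: "real mat \<Rightarrow> real vec \<Rightarrow> real vec" where
  "mon_vec B x = vec (dim_row B) (\<lambda>j. \<Prod>i<dim_col B. (x $ i) powr (B $$ (j, i)))"

definition A_kappa :: "real mat \<Rightarrow> real vec \<Rightarrow> real mat" where
  "A_kappa A \<kappa> = A * mat_diag (dim_col A) (\<lambda>j. \<kappa> $ j)"

definition f_kappa :: "real mat \<Rightarrow> real mat \<Rightarrow> real vec \<Rightarrow> real vec \<Rightarrow> real vec" where
  "f_kappa A B \<kappa> x = A_kappa A \<kappa> *\<^sub>v mon_vec B x"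

definition mat_image :: "real mat \<Rightarrow> real vec set" where
  "mat_image A = {A *\<^sub>v v | v. v \<in> carrier_vec (dim_col A)}"

definition injective_wrt :: "nat \<Rightarrow> (real vec \<Rightarrow> real vec) \<Rightarrow> real vec set \<Rightarrow> bool" where
  "injective_wrt n g S \<longleftrightarrow>
     (\<forall>x \<in> pos_vecs n. \<forall>y \<in> pos_vecs n. x \<noteq> y \<and> x - y \<in> S \<longrightarrow> g x \<noteq> g y)"

end

theory Submission
  imports Defs
begin

text \<open>
  For \<open>x \<noteq> y\<close> in the positive orthant, secant slopes of \<open>ln\<close> and \<open>exp\<close> write
  \<open>f\<^sub>\<kappa> x - f\<^sub>\<kappa> y = A diag(k) B diag(l) (x - y)\<close> with positive \<open>k\<close>, \<open>l\<close>, and every positive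
  pair \<open>(k, l)\<close> arises in this way for a suitable \<open>\<kappa>\<close>. So injectivity for all \<open>\<kappa>\<close> says that
  \<open>A diag(k) B diag(l)\<close> has trivial kernel on \<open>im A\<close>. With a rank factorisation \<open>A = P Q\<close> this
  is the nonvanishing of \<open>det (Q diag(k) B diag(l) P)\<close>, which by Cauchy--Binet is a polynomial
  in \<open>k\<close>, \<open>l\<close> with coefficient \<open>det A\<^sub>I\<^sub>J det B\<^sub>J\<^sub>I\<close> at the squarefree monomial
  \<open>\<Prod>\<^sub>j\<^sub>\<in>\<^sub>J k\<^sub>j \<Prod>\<^sub>i\<^sub>\<in>\<^sub>I l\<^sub>i\<close>. Such a polynomial has no zero in the positive orthant iff its
  nonzero coefficients share one sign: a single term dominates when its variables are \<open>1\<close>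
  and all others are small, and otherwise the intermediate value theorem yields a zero.
\<close>

section \<open>Cauchy--Binet\<close>

lemma bij_betw_pick:
  assumes "finite J"
  shows "bij_betw (pick J) {0..<card J} J"
proof -
  have inj: "inj_on (pick J) {0..<card J}"
    unfolding inj_on_def by (metis atLeastLessThan_iff nat_neq_iff pick_mono)
  have sub: "pick J ` {0..<card J} \<subseteq> J"
    using pick_in_set by auto
  have "card (pick J ` {0..<card J}) = card J"
    using card_image[OF inj] by simp
  then have "pick J ` {0..<card J} = J"
    using sub assms by (metis card_subset_eq)
  with inj show ?thesis
    unfolding bij_betw_def by auto
qed

lemma prod_pick:
  assumes "finite J"
  shows "(\<Prod>a = 0..<card J. g (pick J a)) = (\<Prod>j\<in>J. g j)"
  using prod.reindex_bij_betw[OF bij_betw_pick[OF assms], of g] by simp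

lemma card_less_in_set:
  fixes J :: "nat set"
  assumes "finite J" "x \<in> J"
  shows "card {a\<in>J. a < x} < card J"
  using assms by (intro psubset_card_mono) auto

lemma carrier_submatrix:
  assumes X: "X \<in> carrier_mat a b" and I: "I \<subseteq> {0..<a}" and J: "J \<subseteq> {0..<b}"
  shows "submatrix X I J \<in> carrier_mat (card I) (card J)"
proof (rule carrier_matI)
  have "{i. i < a \<and> i \<in> I} = I"
    using I by auto
  then show "dim_row (submatrix X I J) = card I"
    using X unfolding dim_submatrix by (metis carrier_matD(1))
  have "{j. j < b \<and> j \<in> J} = J"
    using J by auto
  then show "dim_col (submatrix X I J) = card J"
    using X unfolding dim_submatrix by (metis carrier_matD(2))
qed

lemma carrier_submatrix_UNIV:
  assumes X: "X \<in> carrier_mat a b"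
  shows "J \<subseteq> {0..<b} \<Longrightarrow> submatrix X UNIV J \<in> carrier_mat a (card J)"
    and "I \<subseteq> {0..<a} \<Longrightarrow> submatrix X I UNIV \<in> carrier_mat (card I) b"
proof -
  assume J: "J \<subseteq> {0..<b}"
  show "submatrix X UNIV J \<in> carrier_mat a (card J)"
  proof (rule carrier_matI)
    show "dim_row (submatrix X UNIV J) = a"
      using X by (simp add: dim_submatrix)
    show "dim_col (submatrix X UNIV J) = card J"
      using carrier_matD(2)[OF carrier_submatrix[OF X empty_subsetI J]] by (simp only: dim_submatrix)
  qed
next
  assume I: "I \<subseteq> {0..<a}"
  show "submatrix X I UNIV \<in> carrier_mat (card I) b"
  proof (rule carrier_matI)
    show "dim_col (submatrix X I UNIV) = b"
      using X by (simp add: dim_submatrix)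
    show "dim_row (submatrix X I UNIV) = card I"
      using carrier_matD(1)[OF carrier_submatrix[OF X I empty_subsetI]] by (simp only: dim_submatrix)
  qed
qed

lemma submatrix_UNIV_UNIV [simp]: "submatrix X UNIV UNIV = X"
  by (rule eq_matI) (auto simp: dim_submatrix submatrix_index pick_UNIV)

lemma submatrix_submatrix_UNIV: "submatrix (submatrix X I UNIV) UNIV J = submatrix X I J"
proof (rule eq_matI)
  fix a b assume "a < dim_row (submatrix X I J)" and "b < dim_col (submatrix X I J)"
  then have a: "a < card {i. i < dim_row X \<and> i \<in> I}" and b: "b < card {j. j < dim_col X \<and> j \<in> J}"
    by (auto simp: dim_submatrix)
  show "submatrix (submatrix X I UNIV) UNIV J $$ (a, b) = submatrix X I J $$ (a, b)"
    using a b pick_le[OF b] by (simp add: submatrix_index dim_submatrix pick_UNIV)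
qed (auto simp: dim_submatrix)

lemma submatrix_mult:
  assumes X: "X \<in> carrier_mat a m" and Y: "Y \<in> carrier_mat m b"
  shows "submatrix (X * Y) I J = submatrix X I UNIV * submatrix Y UNIV J"
proof (rule eq_matI)
  fix i j assume "i < dim_row (submatrix X I UNIV * submatrix Y UNIV J)"
    and "j < dim_col (submatrix X I UNIV * submatrix Y UNIV J)"
  then have i: "i < card {i. i < a \<and> i \<in> I}" and j: "j < card {j. j < b \<and> j \<in> J}"
    using X Y by (simp_all add: dim_submatrix)
  have "submatrix (X * Y) I J $$ (i, j) = (\<Sum>k<m. X $$ (pick I i, k) * Y $$ (k, pick J j))"
    using i j X Y pick_le[OF i] pick_le[OF j]
    by (auto simp: submatrix_index scalar_prod_def lessThan_atLeast0 intro!: sum.cong)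
  also have "\<dots> = (submatrix X I UNIV * submatrix Y UNIV J) $$ (i, j)"
    using i j X Y
    by (auto simp: scalar_prod_def lessThan_atLeast0 submatrix_index pick_UNIV dim_submatrix
        intro!: sum.cong)
  finally show "submatrix (X * Y) I J $$ (i, j) = (submatrix X I UNIV * submatrix Y UNIV J) $$ (i, j)" .
qed (use X Y in \<open>auto simp: dim_submatrix\<close>)

definition index_injections :: "nat \<Rightarrow> nat \<Rightarrow> (nat \<Rightarrow> nat) set" where
  "index_injections k m =
     {f. (\<forall>i\<in>{0..<k}. f i \<in> {0..<m}) \<and> (\<forall>i. i \<notin> {0..<k} \<longrightarrow> f i = i) \<and> inj_on f {0..<k}}"

text \<open>Multilinearity in the rows of \<open>X * Y\<close>; the maps that are not injective
  select a repeated row of \<open>Y\<close> and contribute nothing.\<close>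
lemma det_mult_sum_index_injections:
  fixes X Y :: "'a::comm_ring_1 mat"
  assumes X: "X \<in> carrier_mat k m" and Y: "Y \<in> carrier_mat m k"
  shows "det (X * Y) = (\<Sum>f\<in>index_injections k m.
           (\<Prod>i\<in>{0..<k}. X $$ (i, f i)) * det (mat\<^sub>r k k (\<lambda>i. row Y (f i))))"
proof -
  let ?F = "{f. (\<forall>i\<in>{0..<k}. f i \<in> {0..<m}) \<and> (\<forall>i. i \<notin> {0..<k} \<longrightarrow> f i = i)}"
  let ?h = "\<lambda>f. (\<Prod>i\<in>{0..<k}. X $$ (i, f i)) * det (mat\<^sub>r k k (\<lambda>i. row Y (f i)))"
  have "det (X * Y) = (\<Sum>f\<in>?F. det (mat\<^sub>r k k (\<lambda>i. X $$ (i, f i) \<cdot>\<^sub>v row Y (f i))))"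
    unfolding mat_mul_finsum_alt[OF X Y] by (rule det_linear_rows_sum) (use Y in auto)
  also have "\<dots> = sum ?h ?F"
    by (intro sum.cong refl det_rows_mul) (use Y in auto)
  also have "\<dots> = sum ?h (index_injections k m)"
  proof (rule sum.mono_neutral_right)
    show "finite ?F"
      by (rule finite_bounded_functions) auto
    show "index_injections k m \<subseteq> ?F"
      unfolding index_injections_def by blast
    show "\<forall>f\<in>?F - index_injections k m. ?h f = 0"
    proof
      fix f assume "f \<in> ?F - index_injections k m"
      then obtain i j where "f i = f j" "i \<noteq> j" "i < k" "j < k" "f i < m"
        unfolding index_injections_def inj_on_def by auto
      then have "det (mat\<^sub>r k k (\<lambda>i. row Y (f i))) = 0"
        by (intro det_identical_rows[of _ k i j]) (use Y in auto)
      then show "?h f = 0" by simp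
    qed
  qed
  finally show ?thesis .
qed

text \<open>An injection \<open>{0..<k} \<rightarrow> {0..<m}\<close> is the same as its image \<open>J\<close> together with
  the permutation recording the order in which it enumerates \<open>J\<close>.\<close>
lemma bij_betw_index_injections:
  "bij_betw (\<lambda>(J, p) i. if i < k then pick J (p i) else i)
     (SIGMA J:{J. J \<subseteq> {0..<m} \<and> card J = k}. {p. p permutes {0..<k}}) (index_injections k m)"
proof (rule bij_betw_byWitness[where
      f' = "\<lambda>f. (f ` {0..<k}, \<lambda>i. if i < k then card {a \<in> f ` {0..<k}. a < f i} else i)"])
  let ?U = "{0..<k}"
  let ?S = "SIGMA J:{J. J \<subseteq> {0..<m} \<and> card J = k}. {p. p permutes ?U}"
  let ?f = "\<lambda>J p i. if i < k then pick J (p i) else i"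
  let ?rank = "\<lambda>f i. if i < k then card {a \<in> f ` ?U. a < f i} else i"
  have pick_perm: "p i < k" "pick J (p i) \<in> J" "card {a \<in> J. a < pick J (p i)} = p i"
    if "card J = k" "p permutes ?U" "i < k" for J p i
    using that permutes_in_image[OF that(2)] pick_in_set[of "p i" J] card_pick[of "p i" J] by auto
  have image_pick_perm: "?f J p ` ?U = J" if "J \<subseteq> {0..<m}" "card J = k" "p permutes ?U" for J p
  proof -
    have "?f J p ` ?U = pick J ` (p ` ?U)"
      by (auto simp: image_image)
    also have "\<dots> = J"
      using permutes_image[OF that(3)] bij_betw_pick[OF finite_subset[OF that(1)]] that(2)
      by (simp add: bij_betw_def)
    finally show ?thesis .
  qed
  have pick_rank: "pick (f ` ?U) (?rank f i) = f i" if "i < k" for f i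
    using that pick_card_in_set by auto
  show "\<forall>Jp\<in>?S. (\<lambda>f. (f ` ?U, ?rank f)) ((\<lambda>(J, p). ?f J p) Jp) = Jp"
  proof
    fix Jp assume "Jp \<in> ?S"
    then obtain J p where Jp: "Jp = (J, p)" and J: "J \<subseteq> {0..<m}" "card J = k" and p: "p permutes ?U"
      by auto
    have image: "?f J p ` ?U = J"
      using image_pick_perm[OF J p] .
    have "?rank (?f J p) i = p i" for i
    proof (cases "i < k")
      case True
      then show ?thesis
        unfolding image using pick_perm(3)[OF J(2) p True] by simp
    next
      case False
      then show ?thesis
        using p by (simp add: permutes_def)
    qed
    then show "(\<lambda>f. (f ` ?U, ?rank f)) ((\<lambda>(J, p). ?f J p) Jp) = Jp"
      unfolding Jp using image by auto
  qed
  show "\<forall>f\<in>index_injections k m. (\<lambda>(J, p). ?f J p) (f ` ?U, ?rank f) = f"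
  proof
    fix f assume "f \<in> index_injections k m"
    then have "?f (f ` ?U) (?rank f) i = f i" for i
      using pick_rank[of i f] unfolding index_injections_def by auto
    then show "(\<lambda>(J, p). ?f J p) (f ` ?U, ?rank f) = f"
      by auto
  qed
  show "(\<lambda>(J, p). ?f J p) ` ?S \<subseteq> index_injections k m"
  proof
    fix g assume "g \<in> (\<lambda>(J, p). ?f J p) ` ?S"
    then obtain J p where g: "g = ?f J p" and J: "J \<subseteq> {0..<m}" "card J = k" and p: "p permutes ?U"
      by auto
    have "inj_on (?f J p) ?U"
    proof (rule inj_onI)
      fix i j assume "i \<in> ?U" "j \<in> ?U" "?f J p i = ?f J p j"
      then have "p i = p j"
        using pick_perm(3)[OF J(2) p] by (metis atLeastLessThan_iff)
      then show "i = j"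
        using permutes_inj[OF p] by (auto dest: injD)
    qed
    moreover have "pick J (p i) \<in> {0..<m}" if "i < k" for i
      using pick_perm(2)[OF J(2) p that] J(1) by blast
    ultimately show "g \<in> index_injections k m"
      unfolding g index_injections_def by auto
  qed
  show "(\<lambda>f. (f ` ?U, ?rank f)) ` index_injections k m \<subseteq> ?S"
  proof
    fix Jp assume "Jp \<in> (\<lambda>f. (f ` ?U, ?rank f)) ` index_injections k m"
    then obtain f where Jp: "Jp = (f ` ?U, ?rank f)" and "f \<in> index_injections k m"
      by auto
    then have inj: "inj_on f ?U" and image: "f ` ?U \<subseteq> {0..<m}"
      unfolding index_injections_def by auto
    have card: "card (f ` ?U) = k"
      using card_image[OF inj] by simp
    have "?rank f permutes ?U"
    proof (rule inj_on_nat_permutes)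
      show "inj_on (?rank f) ?U"
      proof (rule inj_onI)
        fix i j assume ij: "i \<in> ?U" "j \<in> ?U" "?rank f i = ?rank f j"
        then have "f i = f j"
          using pick_rank[of i f] pick_rank[of j f] by auto
        then show "i = j"
          using inj ij unfolding inj_on_def by blast
      qed
      show "?rank f \<in> ?U \<rightarrow> ?U"
      proof
        fix i assume i: "i \<in> ?U"
        have "card {a \<in> f ` ?U. a < f i} < card (f ` ?U)"
          using i by (intro card_less_in_set) auto
        then show "?rank f i \<in> ?U"
          using i card by simp
      qed
    qed auto
    then show "Jp \<in> ?S"
      unfolding Jp using image card by blast
  qed
qed

lemma sum_permutations_pick:
  fixes X Y :: "'a::comm_ring_1 mat"
  assumes X: "X \<in> carrier_mat k m" and Y: "Y \<in> carrier_mat m k"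
    and J: "J \<subseteq> {0..<m}" "card J = k"
  shows "(\<Sum>p | p permutes {0..<k}. (\<Prod>i\<in>{0..<k}. X $$ (i, pick J (p i)))
            * det (mat\<^sub>r k k (\<lambda>i. row Y (pick J (p i)))))
         = det (submatrix X UNIV J) * det (submatrix Y J UNIV)"
proof -
  have XJ: "submatrix X UNIV J \<in> carrier_mat k k" and YJ: "submatrix Y J UNIV \<in> carrier_mat k k"
    using carrier_submatrix_UNIV(1)[OF X J(1)] carrier_submatrix_UNIV(2)[OF Y J(1)] J(2) by auto
  have pick_J: "pick J a < m" if "a < k" for a
    using pick_in_set[of a J] that J by auto
  have restrict: "{i. i < m \<and> i \<in> J} = J"
    using J by auto
  have "(\<Prod>i\<in>{0..<k}. X $$ (i, pick J (p i))) * det (mat\<^sub>r k k (\<lambda>i. row Y (pick J (p i))))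
        = signof p * (\<Prod>i\<in>{0..<k}. submatrix X UNIV J $$ (i, p i)) * det (submatrix Y J UNIV)"
    if p: "p permutes {0..<k}" for p
  proof -
    have pk: "p i < k" if "i < k" for i
      using p that permutes_in_image by fastforce
    have "mat\<^sub>r k k (\<lambda>i. row Y (pick J (p i))) = mat k k (\<lambda>(i, j). submatrix Y J UNIV $$ (p i, j))"
      by (rule eq_matI) (use Y pk pick_J in \<open>auto simp: submatrix_index restrict J pick_UNIV\<close>)
    then have "det (mat\<^sub>r k k (\<lambda>i. row Y (pick J (p i)))) = signof p * det (submatrix Y J UNIV)"
      using det_permute_rows[OF YJ p] by simp
    moreover have "(\<Prod>i\<in>{0..<k}. X $$ (i, pick J (p i))) = (\<Prod>i\<in>{0..<k}. submatrix X UNIV J $$ (i, p i))"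
      by (rule prod.cong) (use X pk in \<open>auto simp: submatrix_index restrict J pick_UNIV\<close>)
    ultimately show ?thesis by simp
  qed
  then have "(\<Sum>p | p permutes {0..<k}. (\<Prod>i\<in>{0..<k}. X $$ (i, pick J (p i)))
            * det (mat\<^sub>r k k (\<lambda>i. row Y (pick J (p i)))))
      = (\<Sum>p | p permutes {0..<k}. signof p * (\<Prod>i\<in>{0..<k}. submatrix X UNIV J $$ (i, p i))
            * det (submatrix Y J UNIV))"
    by (intro sum.cong) auto
  also have "\<dots> = det (submatrix X UNIV J) * det (submatrix Y J UNIV)"
    unfolding det_def'[OF XJ] sum_distrib_right ..
  finally show ?thesis .
qed

theorem cauchy_binet:
  fixes X Y :: "'a::comm_ring_1 mat"
  assumes X: "X \<in> carrier_mat k m" and Y: "Y \<in> carrier_mat m k"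
  shows "det (X * Y) = (\<Sum>J | J \<subseteq> {0..<m} \<and> card J = k.
           det (submatrix X UNIV J) * det (submatrix Y J UNIV))"
proof -
  let ?h = "\<lambda>f. (\<Prod>i\<in>{0..<k}. X $$ (i, f i)) * det (mat\<^sub>r k k (\<lambda>i. row Y (f i)))"
  let ?f = "\<lambda>J p i. if i < k then pick J (p i) else i"
  have h_f: "?h (?f J p) = (\<Prod>i\<in>{0..<k}. X $$ (i, pick J (p i)))
                * det (mat\<^sub>r k k (\<lambda>i. row Y (pick J (p i))))" for J p
  proof -
    have "mat\<^sub>r k k (\<lambda>i. row Y (?f J p i)) = mat\<^sub>r k k (\<lambda>i. row Y (pick J (p i)))"
      by (rule eq_matI) auto
    then show ?thesis by simp
  qed
  have "det (X * Y) = sum ?h (index_injections k m)"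
    by (rule det_mult_sum_index_injections[OF X Y])
  also have "\<dots> = (\<Sum>Jp\<in>(SIGMA J:{J. J \<subseteq> {0..<m} \<and> card J = k}. {p. p permutes {0..<k}}).
                    ?h ((\<lambda>(J, p). ?f J p) Jp))"
    by (rule sum.reindex_bij_betw[OF bij_betw_index_injections, symmetric])
  also have "\<dots> = (\<Sum>(J, p)\<in>(SIGMA J:{J. J \<subseteq> {0..<m} \<and> card J = k}. {p. p permutes {0..<k}}).
                    ?h (?f J p))"
    by (rule sum.cong) auto
  also have "\<dots> = (\<Sum>J | J \<subseteq> {0..<m} \<and> card J = k. \<Sum>p | p permutes {0..<k}. ?h (?f J p))"
    by (rule sum.Sigma[symmetric]) (auto intro: finite_permutations)
  also have "\<dots> = (\<Sum>J | J \<subseteq> {0..<m} \<and> card J = k.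
                    det (submatrix X UNIV J) * det (submatrix Y J UNIV))"
    unfolding h_f by (intro sum.cong refl sum_permutations_pick[OF X Y]) auto
  finally show ?thesis .
qed

section \<open>Rank factorisation\<close>

lemma (in vec_space) exists_column_basis:
  assumes A: "A \<in> carrier_mat n nc"
  obtains L where "distinct L" "set L \<subseteq> set (cols A)" "lin_indpt (set L)"
    "length L = rank A" "set (cols A) \<subseteq> span (set L)"
proof -
  have cols: "set (cols A) \<subseteq> carrier_vec n"
    using A cols_dim by blast
  have "lin_indpt {}"
    unfolding lin_dep_def by auto
  then obtain S where fin: "finite S" and max: "maximal S (\<lambda>T. T \<subseteq> set (cols A) \<and> lin_indpt T)"
    using maximal_exists_superset[of "set (cols A)" "\<lambda>T. T \<subseteq> set (cols A) \<and> lin_indpt T" "{}"]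
    by auto
  then have SA: "S \<subseteq> set (cols A)" and indpt: "lin_indpt S"
    unfolding maximal_def by auto
  have S: "S \<subseteq> carrier_vec n"
    using SA cols by auto
  have "c \<in> span S" if c: "c \<in> set (cols A)" for c
  proof (rule ccontr)
    assume c_span: "c \<notin> span S"
    then have "c \<notin> S"
      using span_mem[OF S] by auto
    then have "lin_indpt (insert c S)"
      using lin_dep_iff_in_span[OF S indpt _ \<open>c \<notin> S\<close>] c_span c cols by auto
    then have "insert c S = S"
      using max c SA unfolding maximal_def by blast
    then show False
      using \<open>c \<notin> S\<close> by auto
  qed
  moreover obtain L where "set L = S" "distinct L"
    using finite_distinct_list[OF fin] by auto
  moreover have "length L = rank A"
    using rank_card_indpt[OF A max] \<open>set L = S\<close> \<open>distinct L\<close> distinct_card by metis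
  ultimately show ?thesis
    using that SA indpt by blast
qed

text \<open>The columns of \<open>P\<close> are a basis of the column space of \<open>A\<close>; \<open>E\<close> selects them from \<open>A\<close>.\<close>
lemma (in vec_space) rank_factorization:
  assumes A: "A \<in> carrier_mat n nc"
  obtains P Q E where "P \<in> carrier_mat n (rank A)" "Q \<in> carrier_mat (rank A) nc"
    "E \<in> carrier_mat nc (rank A)" "A = P * Q" "P = A * E"
    "\<And>w. w \<in> carrier_vec (rank A) \<Longrightarrow> P *\<^sub>v w = 0\<^sub>v n \<Longrightarrow> w = 0\<^sub>v (rank A)"
proof -
  obtain L where L: "distinct L" "set L \<subseteq> set (cols A)" "lin_indpt (set L)"
      "length L = rank A" "set (cols A) \<subseteq> span (set L)"
    using exists_column_basis[OF A] .
  have L_carrier: "set L \<subseteq> carrier_vec n"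
    using L(2) A cols_dim by blast
  define P where "P = mat_of_cols n L"
  have P: "P \<in> carrier_mat n (rank A)"
    unfolding P_def using L(4) by auto
  have "\<exists>w \<in> carrier_vec (rank A). col A j = P *\<^sub>v w" if "j < nc" for j
  proof -
    have "col A j \<in> span_list L"
      using L(5) that A span_list_as_span[OF L_carrier] by (auto simp: cols_def)
    then obtain c where "col A j = lincomb_list c L"
      by (auto elim: in_span_listE)
    also have "\<dots> = P *\<^sub>v vec (length L) c"
      unfolding P_def using L_carrier by (intro lincomb_list_as_mat_mult) auto
    finally show ?thesis
      using L(4) by auto
  qed
  then obtain W where W: "\<And>j. j < nc \<Longrightarrow> W j \<in> carrier_vec (rank A) \<and> col A j = P *\<^sub>v W j"
    by metis
  define Q where "Q = mat_of_cols (rank A) (map W [0..<nc])"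
  have Q: "Q \<in> carrier_mat (rank A) nc"
    unfolding Q_def by auto
  have "A = P * Q"
  proof (rule eq_matI)
    fix i j assume "i < dim_row (P * Q)" "j < dim_col (P * Q)"
    then have i: "i < n" and j: "j < nc"
      using P Q by auto
    have "col Q j = W j"
      unfolding Q_def using W[OF j] j by (subst col_mat_of_cols) auto
    then have "(P * Q) $$ (i, j) = (P *\<^sub>v W j) $ i"
      using i j P Q by (auto simp: mult_mat_vec_def)
    also have "\<dots> = col A j $ i"
      using W[OF j] by simp
    also have "\<dots> = A $$ (i, j)"
      using i j A by simp
    finally show "A $$ (i, j) = (P * Q) $$ (i, j)" ..
  qed (use A P Q in auto)
  obtain idx where idx: "\<And>k. k < rank A \<Longrightarrow> idx k < nc \<and> L ! k = col A (idx k)"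
  proof -
    have "\<exists>j < nc. L ! k = col A j" if "k < rank A" for k
    proof -
      have "L ! k \<in> set (cols A)"
        using that L(2,4) nth_mem[of k L] by auto
      then show ?thesis
        using A by (auto simp: cols_def)
    qed
    then show thesis
      using that by metis
  qed
  define E where "E = (mat nc (rank A) (\<lambda>(j, k). if j = idx k then 1 else 0) :: 'a mat)"
  have E: "E \<in> carrier_mat nc (rank A)"
    unfolding E_def by auto
  have "P = A * E"
  proof (rule eq_matI)
    fix i k assume "i < dim_row (A * E)" "k < dim_col (A * E)"
    then have i: "i < n" and k: "k < rank A"
      using A E by auto
    have "(A * E) $$ (i, k) = (\<Sum>j<nc. A $$ (i, j) * (if j = idx k then 1 else 0))"
      using i k A unfolding E_def by (auto simp: scalar_prod_def lessThan_atLeast0 intro!: sum.cong)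
    also have "\<dots> = A $$ (i, idx k)"
      using idx[OF k] by (simp add: if_distrib[where f = "\<lambda>a. _ * a"] cong: if_cong)
    finally show "P $$ (i, k) = (A * E) $$ (i, k)"
      unfolding P_def using idx[OF k] i k A L(4) by (simp add: mat_of_cols_index)
  qed (use A P E in auto)
  moreover have "w = 0\<^sub>v (rank A)" if w: "w \<in> carrier_vec (rank A)" "P *\<^sub>v w = 0\<^sub>v n" for w
  proof (rule ccontr)
    assume "w \<noteq> 0\<^sub>v (rank A)"
    moreover have "cols P = L"
      unfolding P_def using L_carrier by (intro cols_mat_of_cols) auto
    ultimately have "lin_dep (set L)"
      using lin_depI[OF P w(1) _ w(2)] L(1) by auto
    then show False
      using L(3) by simp
  qed
  ultimately show ?thesis
    using that P Q E \<open>A = P * Q\<close> by blast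
qed

section \<open>Squarefree polynomials on the positive orthant\<close>

definition squarefree_poly :: "'t set \<Rightarrow> ('t \<Rightarrow> 'v set) \<Rightarrow> ('t \<Rightarrow> real) \<Rightarrow> ('v \<Rightarrow> real) \<Rightarrow> real"
  where "squarefree_poly T supp c x = (\<Sum>t\<in>T. c t * (\<Prod>v\<in>supp t. x v))"

lemma squarefree_poly_uminus:
  "squarefree_poly T supp (\<lambda>t. - c t) x = - squarefree_poly T supp c x"
  unfolding squarefree_poly_def by (simp add: sum_negf)

lemma prod_le_factor:
  fixes x :: "'v \<Rightarrow> real"
  assumes "finite S" "\<And>v. v \<in> S \<Longrightarrow> 0 \<le> x v \<and> x v \<le> 1" "u \<in> S"
  shows "(\<Prod>v\<in>S. x v) \<le> x u"
proof -
  have "(\<Prod>v\<in>S. x v) = x u * (\<Prod>v\<in>S - {u}. x v)"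
    using assms(1,3) by (rule prod.remove)
  also have "\<dots> \<le> x u * 1"
    using assms by (intro mult_left_mono prod_le_1) auto
  finally show ?thesis by simp
qed

text \<open>Put the variables of the support of \<open>t\<^sub>0\<close> to \<open>1\<close> and all others to a small \<open>\<epsilon>\<close>: by the
  antichain property every other monomial then contains a factor \<open>\<epsilon>\<close>, and the term of
  \<open>t\<^sub>0\<close> dominates.\<close>
lemma squarefree_poly_pos_somewhere:
  assumes T: "finite T" and supp: "\<And>t. t \<in> T \<Longrightarrow> finite (supp t)"
    and antichain: "\<And>t t'. t \<in> T \<Longrightarrow> t' \<in> T \<Longrightarrow> supp t \<subseteq> supp t' \<Longrightarrow> t = t'"
    and t0: "t0 \<in> T" "c t0 > 0"
  obtains x where "\<And>v. x v > 0" "squarefree_poly T supp c x > 0"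
proof -
  define K where "K = (\<Sum>t\<in>T. \<bar>c t\<bar>)"
  have "K \<ge> 0"
    unfolding K_def by (rule sum_nonneg) auto
  define \<epsilon> where "\<epsilon> = min 1 (c t0 / (2 * (K + 1)))"
  have \<epsilon>: "0 < \<epsilon>" "\<epsilon> \<le> 1"
    unfolding \<epsilon>_def using t0 \<open>K \<ge> 0\<close> by auto
  have "K * \<epsilon> \<le> K * (c t0 / (2 * (K + 1)))"
    using \<open>K \<ge> 0\<close> unfolding \<epsilon>_def by (intro mult_left_mono) auto
  also have "\<dots> = K / (K + 1) * (c t0 / 2)"
    by simp
  also have "\<dots> \<le> 1 * (c t0 / 2)"
    using \<open>K \<ge> 0\<close> t0 by (intro mult_right_mono) auto
  finally have K\<epsilon>: "K * \<epsilon> < c t0"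
    using t0 by linarith
  define x where "x v = (if v \<in> supp t0 then 1 else \<epsilon>)" for v
  have x: "0 \<le> x v" "x v \<le> 1" for v
    using \<epsilon> unfolding x_def by auto
  have small: "\<bar>c t * (\<Prod>v\<in>supp t. x v)\<bar> \<le> \<bar>c t\<bar> * \<epsilon>" if t: "t \<in> T - {t0}" for t
  proof -
    obtain u where u: "u \<in> supp t" "u \<notin> supp t0"
      using antichain[of t t0] t t0 by blast
    have "(\<Prod>v\<in>supp t. x v) \<le> x u"
      using supp t u x by (intro prod_le_factor) auto
    then have "(\<Prod>v\<in>supp t. x v) \<le> \<epsilon>"
      using u unfolding x_def by simp
    moreover have "0 \<le> (\<Prod>v\<in>supp t. x v)"
      using x by (simp add: prod_nonneg)
    ultimately show ?thesis
      by (simp add: abs_mult mult_left_mono)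
  qed
  have "c t0 - K * \<epsilon> \<le> c t0 - (\<Sum>t\<in>T - {t0}. \<bar>c t\<bar> * \<epsilon>)"
    unfolding K_def sum_distrib_right using T \<epsilon> by (auto intro!: sum_mono2)
  also have "\<dots> \<le> c t0 + (\<Sum>t\<in>T - {t0}. c t * (\<Prod>v\<in>supp t. x v))"
    using small sum_mono[of "T - {t0}" "\<lambda>t. - (\<bar>c t\<bar> * \<epsilon>)" "\<lambda>t. c t * (\<Prod>v\<in>supp t. x v)"]
    by (fastforce simp: sum_negf abs_le_iff)
  also have "\<dots> = squarefree_poly T supp c x"
    unfolding squarefree_poly_def
    using sum.remove[OF T t0(1), of "\<lambda>t. c t * (\<Prod>v\<in>supp t. x v)"] by (simp add: x_def)
  finally have "squarefree_poly T supp c x > 0"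
    using K\<epsilon> by linarith
  moreover have "x v > 0" for v
    using \<epsilon> unfolding x_def by simp
  ultimately show ?thesis
    using that by blast
qed

lemma squarefree_poly_zero_between:
  assumes x1: "\<And>v. v \<in> V \<Longrightarrow> x1 v > 0" "squarefree_poly T supp c x1 > 0"
    and x2: "\<And>v. v \<in> V \<Longrightarrow> x2 v > 0" "squarefree_poly T supp c x2 < 0"
  obtains x where "\<And>v. v \<in> V \<Longrightarrow> x v > 0" "squarefree_poly T supp c x = 0"
proof -
  define y where "y \<tau> v = (1 - \<tau>) * x1 v + \<tau> * x2 v" for \<tau> :: real and v
  have "continuous_on {0..1} (\<lambda>\<tau>. squarefree_poly T supp c (y \<tau>))"
    unfolding squarefree_poly_def y_def by (intro continuous_intros)
  moreover have "y 0 = x1" "y 1 = x2"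
    unfolding y_def by auto
  ultimately obtain \<tau> where \<tau>: "0 \<le> \<tau>" "\<tau> \<le> 1" "squarefree_poly T supp c (y \<tau>) = 0"
    using IVT2'[of "\<lambda>\<tau>. squarefree_poly T supp c (y \<tau>)" 1 0 0] x1(2) x2(2) by auto
  have "y \<tau> v > 0" if "v \<in> V" for v
  proof (cases "\<tau> = 0")
    case False
    then have "\<tau> * x2 v > 0" "(1 - \<tau>) * x1 v \<ge> 0"
      using \<tau> x1(1)[OF that] x2(1)[OF that] by auto
    then show ?thesis
      unfolding y_def by linarith
  qed (use x1(1)[OF that] in \<open>simp add: y_def\<close>)
  then show ?thesis
    using that \<tau>(3) by blast
qed

theorem squarefree_poly_nonvanishing_iff:
  fixes supp :: "'t \<Rightarrow> 'v set"
  assumes T: "finite T" and supp: "\<And>t. t \<in> T \<Longrightarrow> finite (supp t) \<and> supp t \<subseteq> V"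
    and antichain: "\<And>t t'. t \<in> T \<Longrightarrow> t' \<in> T \<Longrightarrow> supp t \<subseteq> supp t' \<Longrightarrow> t = t'"
  shows "(\<forall>x. (\<forall>v\<in>V. x v > 0) \<longrightarrow> squarefree_poly T supp c x \<noteq> 0) \<longleftrightarrow>
         (\<forall>t\<in>T. \<forall>t'\<in>T. c t \<noteq> 0 \<and> c t' \<noteq> 0 \<longrightarrow> sgn (c t) = sgn (c t')) \<and> (\<exists>t\<in>T. c t \<noteq> 0)"
    (is "?nonvanishing \<longleftrightarrow> ?same_sign \<and> ?nonzero")
proof
  have supp_finite: "\<And>t. t \<in> T \<Longrightarrow> finite (supp t)"
    using supp by blast
  assume nonvanishing: ?nonvanishing
  have ?same_sign
  proof (intro ballI impI, rule ccontr)
    fix t t' assume t: "t \<in> T" "t' \<in> T" and nz: "c t \<noteq> 0 \<and> c t' \<noteq> 0" and "sgn (c t) \<noteq> sgn (c t')"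
    then have "c t > 0 \<and> c t' < 0 \<or> c t < 0 \<and> c t' > 0"
      by (cases "c t > 0"; cases "c t' > 0") auto
    then obtain tp tn where tp: "tp \<in> T" "c tp > 0" and tn: "tn \<in> T" "- c tn > 0"
      using t by auto
    obtain x1 where "\<And>v. x1 v > 0" "squarefree_poly T supp c x1 > 0"
      using squarefree_poly_pos_somewhere[of T supp tp c, OF T supp_finite antichain tp] by blast
    moreover obtain x2 where "\<And>v. x2 v > 0" "squarefree_poly T supp (\<lambda>t. - c t) x2 > 0"
      using squarefree_poly_pos_somewhere[of T supp tn "\<lambda>t. - c t", OF T supp_finite antichain tn] by blast
    ultimately obtain x where "\<And>v. v \<in> V \<Longrightarrow> x v > 0" "squarefree_poly T supp c x = 0"
      using squarefree_poly_zero_between[of V x1 T supp c x2] by (auto simp: squarefree_poly_uminus)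
    then show False
      using nonvanishing by blast
  qed
  moreover have ?nonzero
  proof (rule ccontr)
    assume "\<not> ?nonzero"
    then have "squarefree_poly T supp c (\<lambda>_. 1) = 0"
      unfolding squarefree_poly_def by auto
    then show False
      using nonvanishing by auto
  qed
  ultimately show "?same_sign \<and> ?nonzero" ..
next
  assume "?same_sign \<and> ?nonzero"
  then obtain t0 where t0: "t0 \<in> T" "c t0 \<noteq> 0" and same_sign: ?same_sign
    by blast
  show ?nonvanishing
  proof (intro allI impI)
    fix x :: "'v \<Rightarrow> real" assume x: "\<forall>v\<in>V. x v > 0"
    have monomial_pos: "(\<Prod>v\<in>supp t. x v) > 0" if "t \<in> T" for t
      using x supp[OF that] by (auto intro: prod_pos)
    have same_sign_nonneg: "sgn (c t0) * c t \<ge> 0" if "t \<in> T" for t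
    proof (cases "c t = 0")
      case False
      then have "sgn (c t0) = sgn (c t)"
        using same_sign t0 that by blast
      then show ?thesis
        by (simp add: sgn_if)
    qed simp
    then have "sgn (c t0) * c t0 * (\<Prod>v\<in>supp t0. x v)
          \<le> (\<Sum>t\<in>T. sgn (c t0) * c t * (\<Prod>v\<in>supp t. x v))"
      by (intro member_le_sum[OF t0(1) _ T])
        (auto intro!: mult_nonneg_nonneg[OF same_sign_nonneg less_imp_le[OF monomial_pos]])
    also have "\<dots> = sgn (c t0) * squarefree_poly T supp c x"
      unfolding squarefree_poly_def sum_distrib_left by (simp add: ac_simps)
    also have "sgn (c t0) * c t0 = \<bar>c t0\<bar>"
      by (simp add: sgn_if)
    finally have "\<bar>c t0\<bar> * (\<Prod>v\<in>supp t0. x v) \<le> sgn (c t0) * squarefree_poly T supp c x" .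
    moreover have "0 < \<bar>c t0\<bar> * (\<Prod>v\<in>supp t0. x v)"
      using monomial_pos[OF t0(1)] t0(2) by simp
    ultimately show "squarefree_poly T supp c x \<noteq> 0"
      by auto
  qed
qed

section \<open>Injectivity and scaled kernels\<close>

definition scaled_mat :: "real mat \<Rightarrow> (nat \<Rightarrow> real) \<Rightarrow> (nat \<Rightarrow> real) \<Rightarrow> real mat" where
  "scaled_mat B k l = mat (dim_row B) (dim_col B) (\<lambda>(j, i). k j * B $$ (j, i) * l i)"

lemma scaled_mat_carrier [simp]: "B \<in> carrier_mat r n \<Longrightarrow> scaled_mat B k l \<in> carrier_mat r n"
  unfolding scaled_mat_def by auto

lemma scaled_mat_cong:
  assumes "B \<in> carrier_mat r n" "\<And>j. j < r \<Longrightarrow> k j = k' j" "\<And>i. i < n \<Longrightarrow> l i = l' i"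
  shows "scaled_mat B k l = scaled_mat B k' l'"
  using assms unfolding scaled_mat_def by (intro eq_matI) auto

definition secant_slope :: "(real \<Rightarrow> real) \<Rightarrow> real \<Rightarrow> real \<Rightarrow> real" where
  "secant_slope f a b = (if a = b then 1 else (f a - f b) / (a - b))"

lemma secant_slope: "f a - f b = secant_slope f a b * (a - b)"
  unfolding secant_slope_def by simp

lemma secant_slope_pos:
  assumes "strict_mono_on S f" "a \<in> S" "b \<in> S"
  shows "secant_slope f a b > 0"
  using assms unfolding secant_slope_def
  by (cases a b rule: linorder_cases) (auto simp: strict_mono_on_def divide_neg_neg)

lemma exists_pos_pair_ln_diff:
  fixes l v :: real
  assumes "l > 0"
  obtains a b where "a > 0" "b > 0" "a - b = v" "ln a - ln b = l * v"
proof (cases "v = 0")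
  case False
  define b where "b = v / (exp (l * v) - 1)"
  have "exp (l * v) \<noteq> 1"
    using False assms by simp
  then have "b * exp (l * v) - b = b * (exp (l * v) - 1)"
    by (simp add: algebra_simps)
  also have "\<dots> = v"
    unfolding b_def using \<open>exp (l * v) \<noteq> 1\<close> by simp
  finally have "b * exp (l * v) - b = v" .
  moreover have "b > 0"
  proof (cases "v > 0")
    case True
    then show ?thesis unfolding b_def using assms by simp
  next
    case False
    then have "v < 0" "exp (l * v) < 1"
      using \<open>v \<noteq> 0\<close> assms by (auto simp: mult_pos_neg)
    then show ?thesis unfolding b_def by (simp add: divide_neg_neg)
  qed
  ultimately show ?thesis
    using that[of "b * exp (l * v)" b] by (simp add: ln_mult)
qed (use that[of 1 1] in simp)

lemma f_kappa_pos_vecs: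
  assumes A: "A \<in> carrier_mat n r" and B: "B \<in> carrier_mat r n" and x: "x \<in> pos_vecs n"
  shows "f_kappa A B \<kappa> x = A *\<^sub>v vec r (\<lambda>j. \<kappa> $ j * exp (\<Sum>i<n. B $$ (j, i) * ln (x $ i)))"
proof -
  have mon: "mon_vec B x $ j = exp (\<Sum>i<n. B $$ (j, i) * ln (x $ i))" if "j < r" for j
    using x B that unfolding pos_vecs_def mon_vec_def by (auto simp: exp_sum powr_def intro!: prod.cong)
  have m: "mon_vec B x \<in> carrier_vec r"
    using B unfolding mon_vec_def by auto
  have "mat_diag r (\<lambda>j. \<kappa> $ j) *\<^sub>v mon_vec B x
      = vec r (\<lambda>j. \<kappa> $ j * exp (\<Sum>i<n. B $$ (j, i) * ln (x $ i)))"
  proof (rule eq_vecI)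
    fix j assume "j < dim_vec (vec r (\<lambda>j. \<kappa> $ j * exp (\<Sum>i<n. B $$ (j, i) * ln (x $ i))))"
    then have j: "j < r" by simp
    have "(mat_diag r (\<lambda>j. \<kappa> $ j) *\<^sub>v mon_vec B x) $ j
        = (\<Sum>k<r. (if j = k then \<kappa> $ k else 0) * mon_vec B x $ k)"
      using j m unfolding mat_diag_def by (auto simp: scalar_prod_def lessThan_atLeast0 intro!: sum.cong)
    also have "\<dots> = \<kappa> $ j * mon_vec B x $ j"
      by (simp add: if_distrib[where f = "\<lambda>a. a * _"] j cong: if_cong)
    finally show "(mat_diag r (\<lambda>j. \<kappa> $ j) *\<^sub>v mon_vec B x) $ j
        = vec r (\<lambda>j. \<kappa> $ j * exp (\<Sum>i<n. B $$ (j, i) * ln (x $ i))) $ j"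
      using j mon by simp
  qed (auto simp: mat_diag_def)
  then show ?thesis
    unfolding f_kappa_def A_kappa_def using assoc_mult_mat_vec[OF A mat_diag_dim m] A by simp
qed

text \<open>Mean value form of \<open>f\<^sub>\<kappa> x - f\<^sub>\<kappa> y\<close>: \<open>l\<close> and \<open>q\<close> are secant slopes of \<open>ln\<close> and \<open>exp\<close>.\<close>
lemma f_kappa_diff_eq_scaled:
  assumes A: "A \<in> carrier_mat n r" and B: "B \<in> carrier_mat r n"
    and x: "x \<in> pos_vecs n" and y: "y \<in> pos_vecs n"
    and l: "\<And>i. i < n \<Longrightarrow> ln (x $ i) - ln (y $ i) = l i * (x $ i - y $ i)"
    and q: "\<And>j. j < r \<Longrightarrow> exp (\<Sum>i<n. B $$ (j, i) * ln (x $ i)) - exp (\<Sum>i<n. B $$ (j, i) * ln (y $ i))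
              = q j * ((\<Sum>i<n. B $$ (j, i) * ln (x $ i)) - (\<Sum>i<n. B $$ (j, i) * ln (y $ i)))"
  shows "f_kappa A B \<kappa> x - f_kappa A B \<kappa> y = A *\<^sub>v (scaled_mat B (\<lambda>j. \<kappa> $ j * q j) l *\<^sub>v (x - y))"
proof -
  define e where "e z = vec r (\<lambda>j. \<kappa> $ j * exp (\<Sum>i<n. B $$ (j, i) * ln (z $ i)))" for z :: "real vec"
  have xy: "x \<in> carrier_vec n" "y \<in> carrier_vec n"
    using x y unfolding pos_vecs_def by auto
  have "scaled_mat B (\<lambda>j. \<kappa> $ j * q j) l *\<^sub>v (x - y) = e x - e y"
  proof (rule eq_vecI)
    fix j assume "j < dim_vec (e x - e y)"
    then have j: "j < r" unfolding e_def by simp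
    have "(scaled_mat B (\<lambda>j. \<kappa> $ j * q j) l *\<^sub>v (x - y)) $ j
        = \<kappa> $ j * q j * (\<Sum>i<n. B $$ (j, i) * (l i * (x $ i - y $ i)))"
      using j B xy unfolding scaled_mat_def
      by (auto simp: scalar_prod_def lessThan_atLeast0 sum_distrib_left ac_simps intro!: sum.cong)
    also have "(\<Sum>i<n. B $$ (j, i) * (l i * (x $ i - y $ i)))
        = (\<Sum>i<n. B $$ (j, i) * ln (x $ i)) - (\<Sum>i<n. B $$ (j, i) * ln (y $ i))"
      unfolding sum_subtractf[symmetric]
      by (intro sum.cong refl) (simp only: lessThan_iff l right_diff_distrib[symmetric])
    also have "\<kappa> $ j * q j * \<dots> = \<kappa> $ j * (q j * \<dots>)"
      by simp
    also have "\<dots> = (e x - e y) $ j"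
      using j unfolding q[OF j, symmetric] e_def by (simp add: right_diff_distrib)
    finally show "(scaled_mat B (\<lambda>j. \<kappa> $ j * q j) l *\<^sub>v (x - y)) $ j = (e x - e y) $ j" .
  qed (use B in \<open>auto simp: scaled_mat_def e_def\<close>)
  then show ?thesis
    unfolding f_kappa_pos_vecs[OF A B x] f_kappa_pos_vecs[OF A B y] e_def[symmetric]
    using mult_minus_distrib_mat_vec[OF A] by (simp add: e_def)
qed

lemma injective_wrt_if_scaled_kernel_trivial:
  assumes A: "A \<in> carrier_mat n r" and B: "B \<in> carrier_mat r n" and \<kappa>: "\<kappa> \<in> pos_vecs r"
    and kernel: "\<And>k l v. \<forall>j<r. k j > 0 \<Longrightarrow> \<forall>i<n. l i > 0 \<Longrightarrow> v \<in> mat_image A \<Longrightarrow>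
                   A *\<^sub>v (scaled_mat B k l *\<^sub>v v) = 0\<^sub>v n \<Longrightarrow> v = 0\<^sub>v n"
  shows "injective_wrt n (f_kappa A B \<kappa>) (mat_image A)"
  unfolding injective_wrt_def
proof (intro ballI impI notI, elim conjE)
  fix x y assume x: "x \<in> pos_vecs n" and y: "y \<in> pos_vecs n" and "x \<noteq> y"
    and im: "x - y \<in> mat_image A" and eq: "f_kappa A B \<kappa> x = f_kappa A B \<kappa> y"
  define l where "l i = secant_slope ln (x $ i) (y $ i)" for i
  define q where "q j = secant_slope exp (\<Sum>i<n. B $$ (j, i) * ln (x $ i)) (\<Sum>i<n. B $$ (j, i) * ln (y $ i))"
    for j
  have l_pos: "\<forall>i<n. l i > 0"
    using x y unfolding l_def pos_vecs_def
    by (auto intro!: secant_slope_pos[of "{0<..}"] simp: strict_mono_on_def)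
  have k_pos: "\<forall>j<r. \<kappa> $ j * q j > 0"
    using \<kappa> unfolding q_def pos_vecs_def by (auto intro!: mult_pos_pos secant_slope_pos[of UNIV] strict_mono_onI)
  have "f_kappa A B \<kappa> x - f_kappa A B \<kappa> y = A *\<^sub>v (scaled_mat B (\<lambda>j. \<kappa> $ j * q j) l *\<^sub>v (x - y))"
    by (rule f_kappa_diff_eq_scaled[OF A B x y]) (simp_all add: l_def q_def secant_slope)
  moreover have "f_kappa A B \<kappa> y \<in> carrier_vec n"
    using f_kappa_pos_vecs[OF A B y] A by simp
  ultimately have "A *\<^sub>v (scaled_mat B (\<lambda>j. \<kappa> $ j * q j) l *\<^sub>v (x - y)) = 0\<^sub>v n"
    unfolding eq by simp
  then have "x - y = 0\<^sub>v n"
    by (rule kernel[OF k_pos l_pos im])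
  then show False
    using \<open>x \<noteq> y\<close> x y unfolding pos_vecs_def by (auto simp: vec_eq_iff)
qed

lemma scaled_kernel_trivial_if_injective:
  assumes A: "A \<in> carrier_mat n r" and B: "B \<in> carrier_mat r n"
    and inj: "\<forall>\<kappa> \<in> pos_vecs r. injective_wrt n (f_kappa A B \<kappa>) (mat_image A)"
    and k: "\<forall>j<r. k j > 0" and l: "\<forall>i<n. l i > 0"
    and v: "v \<in> mat_image A" "A *\<^sub>v (scaled_mat B k l *\<^sub>v v) = 0\<^sub>v n"
  shows "v = 0\<^sub>v n"
proof (rule ccontr)
  assume "v \<noteq> 0\<^sub>v n"
  have v_carrier: "v \<in> carrier_vec n"
    using v(1) A unfolding mat_image_def by auto
  have "\<forall>i. \<exists>ab. i < n \<longrightarrow> fst ab > 0 \<and> snd ab > 0 \<and> fst ab - snd ab = v $ i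
      \<and> ln (fst ab) - ln (snd ab) = l i * v $ i"
  proof
    fix i show "\<exists>ab. i < n \<longrightarrow> fst ab > 0 \<and> snd ab > 0 \<and> fst ab - snd ab = v $ i
      \<and> ln (fst ab) - ln (snd ab) = l i * v $ i"
    proof (cases "i < n")
      case True
      then obtain a b where "a > 0" "b > 0" "a - b = v $ i" "ln a - ln b = l i * v $ i"
        using exists_pos_pair_ln_diff[of "l i" "v $ i"] l by blast
      then show ?thesis
        by (intro exI[of _ "(a, b)"]) simp
    qed simp
  qed
  then obtain ab where ab: "\<forall>i. i < n \<longrightarrow> fst (ab i) > 0 \<and> snd (ab i) > 0
      \<and> fst (ab i) - snd (ab i) = v $ i \<and> ln (fst (ab i)) - ln (snd (ab i)) = l i * v $ i"
    by (rule choice[THEN exE])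
  define x where "x = vec n (\<lambda>i. fst (ab i))"
  define y where "y = vec n (\<lambda>i. snd (ab i))"
  have x: "x \<in> pos_vecs n" and y: "y \<in> pos_vecs n"
    using ab unfolding x_def y_def pos_vecs_def by auto
  have xy: "x - y = v"
    using ab v_carrier unfolding x_def y_def by (intro eq_vecI) auto
  have ln_xy: "ln (x $ i) - ln (y $ i) = l i * (x $ i - y $ i)" if "i < n" for i
    using ab that unfolding x_def y_def by simp
  define q where "q j = secant_slope exp (\<Sum>i<n. B $$ (j, i) * ln (x $ i)) (\<Sum>i<n. B $$ (j, i) * ln (y $ i))"
    for j
  define \<kappa> where "\<kappa> = vec r (\<lambda>j. k j / q j)"
  have q_pos: "q j > 0" for j
    unfolding q_def by (auto intro!: secant_slope_pos[of UNIV] strict_mono_onI)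
  then have \<kappa>: "\<kappa> \<in> pos_vecs r"
    using k unfolding \<kappa>_def pos_vecs_def by auto
  have "f_kappa A B \<kappa> x - f_kappa A B \<kappa> y = A *\<^sub>v (scaled_mat B (\<lambda>j. \<kappa> $ j * q j) l *\<^sub>v (x - y))"
    unfolding q_def by (rule f_kappa_diff_eq_scaled[OF A B x y ln_xy secant_slope])
  also have "scaled_mat B (\<lambda>j. \<kappa> $ j * q j) l = scaled_mat B k l"
    using q_pos by (intro scaled_mat_cong[OF B]) (simp_all add: \<kappa>_def less_imp_neq[symmetric])
  finally have "f_kappa A B \<kappa> x - f_kappa A B \<kappa> y = 0\<^sub>v n"
    unfolding xy v(2) .
  then have "f_kappa A B \<kappa> x = f_kappa A B \<kappa> y"
    using f_kappa_pos_vecs[OF A B x] f_kappa_pos_vecs[OF A B y] A by (auto simp: vec_eq_iff)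
  moreover have "x \<noteq> y"
    using xy \<open>v \<noteq> 0\<^sub>v n\<close> y by (auto simp: pos_vecs_def)
  ultimately show False
    using inj \<kappa> x y xy v(1) unfolding injective_wrt_def by blast
qed

lemma injective_wrt_iff_scaled_kernel_trivial:
  assumes A: "A \<in> carrier_mat n r" and B: "B \<in> carrier_mat r n"
  shows "(\<forall>\<kappa> \<in> pos_vecs r. injective_wrt n (f_kappa A B \<kappa>) (mat_image A)) \<longleftrightarrow>
    (\<forall>k l. (\<forall>j<r. k j > 0) \<longrightarrow> (\<forall>i<n. l i > 0) \<longrightarrow>
       (\<forall>v\<in>mat_image A. A *\<^sub>v (scaled_mat B k l *\<^sub>v v) = 0\<^sub>v n \<longrightarrow> v = 0\<^sub>v n))"
  using injective_wrt_if_scaled_kernel_trivial[OF A B] scaled_kernel_trivial_if_injective[OF A B]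
  by blast

section \<open>The determinant of \<open>Q C P\<close>\<close>

lemma mat_image_rank_factor:
  assumes A: "A \<in> carrier_mat n r" and P: "P \<in> carrier_mat n s" and Q: "Q \<in> carrier_mat s r"
    and E: "E \<in> carrier_mat r s" and APQ: "A = P * Q" and PAE: "P = A * E"
  shows "mat_image A = (\<lambda>w. P *\<^sub>v w) ` carrier_vec s"
proof
  show "mat_image A \<subseteq> (\<lambda>w. P *\<^sub>v w) ` carrier_vec s"
  proof
    fix v assume "v \<in> mat_image A"
    then obtain u where u: "u \<in> carrier_vec r" and v: "v = A *\<^sub>v u"
      using A unfolding mat_image_def by auto
    have "v = P *\<^sub>v (Q *\<^sub>v u)"
      unfolding v APQ using P Q u by (rule assoc_mult_mat_vec)
    moreover have "Q *\<^sub>v u \<in> carrier_vec s"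
      using Q u by simp
    ultimately show "v \<in> (\<lambda>w. P *\<^sub>v w) ` carrier_vec s"
      by blast
  qed
  show "(\<lambda>w. P *\<^sub>v w) ` carrier_vec s \<subseteq> mat_image A"
  proof
    fix v assume "v \<in> (\<lambda>w. P *\<^sub>v w) ` carrier_vec s"
    then obtain w where w: "w \<in> carrier_vec s" and v: "v = P *\<^sub>v w"
      by blast
    have "v = A *\<^sub>v (E *\<^sub>v w)"
      unfolding v PAE using A E w by (rule assoc_mult_mat_vec)
    moreover have "E *\<^sub>v w \<in> carrier_vec (dim_col A)"
      using A E w by simp
    ultimately show "v \<in> mat_image A"
      unfolding mat_image_def by blast
  qed
qed

lemma image_kernel_trivial_iff_det:
  assumes A: "A \<in> carrier_mat n r" and P: "P \<in> carrier_mat n s" and Q: "Q \<in> carrier_mat s r"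
    and E: "E \<in> carrier_mat r s" and C: "C \<in> carrier_mat r n" and APQ: "A = P * Q" and PAE: "P = A * E"
    and P_inj: "\<And>w. w \<in> carrier_vec s \<Longrightarrow> P *\<^sub>v w = 0\<^sub>v n \<Longrightarrow> w = 0\<^sub>v s"
  shows "(\<forall>v\<in>mat_image A. A *\<^sub>v (C *\<^sub>v v) = 0\<^sub>v n \<longrightarrow> v = 0\<^sub>v n) \<longleftrightarrow> det (Q * C * P) \<noteq> 0"
proof -
  have QCP: "Q * C * P \<in> carrier_mat s s"
    using Q C P by auto
  have ACP: "A *\<^sub>v (C *\<^sub>v (P *\<^sub>v w)) = P *\<^sub>v ((Q * C * P) *\<^sub>v w)" if w: "w \<in> carrier_vec s" for w
  proof -
    have "(Q * C * P) *\<^sub>v w = (Q * C) *\<^sub>v (P *\<^sub>v w)"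
      using Q C P w by (intro assoc_mult_mat_vec) auto
    also have "\<dots> = Q *\<^sub>v (C *\<^sub>v (P *\<^sub>v w))"
      using Q C P w by (intro assoc_mult_mat_vec) auto
    finally show ?thesis
      unfolding APQ using P Q C w by simp
  qed
  have P_zero: "P *\<^sub>v w = 0\<^sub>v n \<longleftrightarrow> w = 0\<^sub>v s" if "w \<in> carrier_vec s" for w
    using P_inj[OF that] P by auto
  have "(\<forall>v\<in>mat_image A. A *\<^sub>v (C *\<^sub>v v) = 0\<^sub>v n \<longrightarrow> v = 0\<^sub>v n)
      \<longleftrightarrow> (\<forall>w\<in>carrier_vec s. A *\<^sub>v (C *\<^sub>v (P *\<^sub>v w)) = 0\<^sub>v n \<longrightarrow> P *\<^sub>v w = 0\<^sub>v n)"
    unfolding mat_image_rank_factor[OF A P Q E APQ PAE] by blast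
  also have "\<dots> \<longleftrightarrow> (\<forall>w\<in>carrier_vec s. (Q * C * P) *\<^sub>v w = 0\<^sub>v s \<longrightarrow> w = 0\<^sub>v s)"
    using ACP P_zero QCP by simp
  also have "\<dots> \<longleftrightarrow> det (Q * C * P) \<noteq> 0"
    using det_0_iff_vec_prod_zero_field[OF QCP] by blast
  finally show ?thesis .
qed

lemma det_submatrix_scaled_mat:
  assumes B: "B \<in> carrier_mat r n" and J: "J \<subseteq> {0..<r}" and I: "I \<subseteq> {0..<n}"
    and card: "card J = card I"
  shows "det (submatrix (scaled_mat B k l) J I) = (\<Prod>j\<in>J. k j) * (\<Prod>i\<in>I. l i) * det (submatrix B J I)"
proof -
  let ?t = "card I"
  have BJI: "submatrix B J I \<in> carrier_mat ?t ?t" and CJI: "submatrix (scaled_mat B k l) J I \<in> carrier_mat ?t ?t"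
    using carrier_submatrix[OF B J I] carrier_submatrix[OF scaled_mat_carrier[OF B] J I] card by auto
  have fin: "finite J" "finite I"
    using J I finite_subset by auto
  have entry: "submatrix (scaled_mat B k l) J I $$ (a, b) = k (pick J a) * submatrix B J I $$ (a, b) * l (pick I b)"
    if "a < ?t" "b < ?t" for a b
  proof -
    have "{j. j < r \<and> j \<in> J} = J" "{i. i < n \<and> i \<in> I} = I"
      using J I by auto
    moreover have "pick J a < r" "pick I b < n"
      using pick_in_set[of a J] pick_in_set[of b I] that card J I by auto
    ultimately show ?thesis
      using that B card by (simp add: submatrix_index scaled_mat_def)
  qed
  have "signof p * (\<Prod>a = 0..<?t. submatrix (scaled_mat B k l) J I $$ (a, p a))
      = (\<Prod>j\<in>J. k j) * (\<Prod>i\<in>I. l i) * (signof p * (\<Prod>a = 0..<?t. submatrix B J I $$ (a, p a)))"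
    if p: "p permutes {0..<?t}" for p
  proof -
    have "(\<Prod>a = 0..<?t. submatrix (scaled_mat B k l) J I $$ (a, p a))
        = (\<Prod>a = 0..<?t. k (pick J a)) * (\<Prod>a = 0..<?t. submatrix B J I $$ (a, p a)) * (\<Prod>a = 0..<?t. l (pick I (p a)))"
      using entry permutes_in_image[OF p] by (simp add: prod.distrib)
    also have "(\<Prod>a = 0..<?t. l (pick I (p a))) = (\<Prod>a = 0..<?t. l (pick I a))"
      using prod.permute[OF p, of "\<lambda>a. l (pick I a)"] by (simp add: o_def)
    also have "\<dots> = (\<Prod>i\<in>I. l i)"
      by (rule prod_pick[OF fin(2)])
    also have "(\<Prod>a = 0..<?t. k (pick J a)) = (\<Prod>j\<in>J. k j)"
      using prod_pick[OF fin(1), of k] card by simp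
    finally show ?thesis by (simp add: ac_simps)
  qed
  then show ?thesis
    unfolding det_def'[OF BJI] det_def'[OF CJI] sum_distrib_left by (intro sum.cong) auto
qed

definition minor_support :: "nat set \<times> nat set \<Rightarrow> (nat + nat) set" where
  "minor_support = (\<lambda>(I, J). Inl ` J \<union> Inr ` I)"

lemma prod_minor_support:
  assumes "finite I" "finite J"
  shows "(\<Prod>v\<in>minor_support (I, J). x v) = (\<Prod>j\<in>J. x (Inl j)) * (\<Prod>i\<in>I. x (Inr i))"
proof -
  have "(\<Prod>v\<in>minor_support (I, J). x v) = (\<Prod>v\<in>Inl ` J. x v) * (\<Prod>v\<in>Inr ` I. x v)"
    unfolding minor_support_def prod.case using assms by (intro prod.union_disjoint) auto
  then show ?thesis
    by (simp add: prod.reindex)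
qed

text \<open>Cauchy--Binet twice: \<open>det (Q C P)\<close> is a squarefree polynomial in the scaling factors,
  with coefficient \<open>det A\<^sub>I\<^sub>J det B\<^sub>J\<^sub>I\<close> at the monomial \<open>\<Prod>\<^sub>j\<^sub>\<in>\<^sub>J k\<^sub>j \<Prod>\<^sub>i\<^sub>\<in>\<^sub>I l\<^sub>i\<close>; the variables
  \<open>k\<^sub>j\<close> and \<open>l\<^sub>i\<close> are \<open>x (Inl j)\<close> and \<open>x (Inr i)\<close>.\<close>
lemma det_scaled_eq_squarefree_poly:
  assumes B: "B \<in> carrier_mat r n" and P: "P \<in> carrier_mat n s"
    and Q: "Q \<in> carrier_mat s r" and A: "A = P * Q"
  shows "det (Q * scaled_mat B (\<lambda>j. x (Inl j)) (\<lambda>i. x (Inr i)) * P)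
    = squarefree_poly ({I. I \<subseteq> {0..<n} \<and> card I = s} \<times> {J. J \<subseteq> {0..<r} \<and> card J = s})
        minor_support (\<lambda>(I, J). det (submatrix A I J) * det (submatrix B J I)) x"
proof -
  let ?C = "scaled_mat B (\<lambda>j. x (Inl j)) (\<lambda>i. x (Inr i))"
  let ?SI = "{I. I \<subseteq> {0..<n} \<and> card I = s}" and ?SJ = "{J. J \<subseteq> {0..<r} \<and> card J = s}"
  have C: "?C \<in> carrier_mat r n"
    using B by simp
  have summand: "det (submatrix Q UNIV J) * det (submatrix (?C * P) J UNIV)
      = (\<Sum>I\<in>?SI. det (submatrix A I J) * det (submatrix B J I) * (\<Prod>v\<in>minor_support (I, J). x v))"
    if J: "J \<in> ?SJ" for J
  proof -
    have CJ: "submatrix ?C J UNIV \<in> carrier_mat s n"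
      using carrier_submatrix_UNIV(2)[OF C] J by auto
    have "det (submatrix (?C * P) J UNIV) = (\<Sum>I\<in>?SI. det (submatrix ?C J I) * det (submatrix P I UNIV))"
      unfolding submatrix_mult[OF C P] submatrix_UNIV_UNIV cauchy_binet[OF CJ P] submatrix_submatrix_UNIV ..
    moreover have "det (submatrix Q UNIV J) * (det (submatrix ?C J I) * det (submatrix P I UNIV))
        = det (submatrix A I J) * det (submatrix B J I) * (\<Prod>v\<in>minor_support (I, J). x v)"
      if I: "I \<in> ?SI" for I
    proof -
      have PI: "submatrix P I UNIV \<in> carrier_mat s s"
        using carrier_submatrix_UNIV(2)[OF P] I by auto
      have QJ: "submatrix Q UNIV J \<in> carrier_mat s s"
        using carrier_submatrix_UNIV(1)[OF Q] J by auto
      have "det (submatrix A I J) = det (submatrix P I UNIV) * det (submatrix Q UNIV J)"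
        unfolding A submatrix_mult[OF P Q] by (rule det_mult[OF PI QJ])
      moreover have "(\<Prod>v\<in>minor_support (I, J). x v) = (\<Prod>j\<in>J. x (Inl j)) * (\<Prod>i\<in>I. x (Inr i))"
        using I J finite_subset by (intro prod_minor_support) auto
      ultimately show ?thesis
        using det_submatrix_scaled_mat[OF B, of J I] I J by simp
    qed
    ultimately show ?thesis
      by (simp add: sum_distrib_left)
  qed
  have "det (Q * ?C * P) = det (Q * (?C * P))"
    using Q C P by simp
  also have "\<dots> = (\<Sum>J\<in>?SJ. det (submatrix Q UNIV J) * det (submatrix (?C * P) J UNIV))"
    using cauchy_binet[OF Q] C P by auto
  also have "\<dots> = (\<Sum>J\<in>?SJ. \<Sum>I\<in>?SI. det (submatrix A I J) * det (submatrix B J I) * (\<Prod>v\<in>minor_support (I, J). x v))"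
    using summand by simp
  also have "\<dots> = (\<Sum>(I, J)\<in>?SI \<times> ?SJ. det (submatrix A I J) * det (submatrix B J I) * (\<Prod>v\<in>minor_support (I, J). x v))"
    by (subst sum.swap) (simp add: sum.cartesian_product)
  also have "\<dots> = squarefree_poly (?SI \<times> ?SJ) minor_support (\<lambda>(I, J). det (submatrix A I J) * det (submatrix B J I)) x"
    unfolding squarefree_poly_def by (intro sum.cong) auto
  finally show ?thesis .
qed

lemma minor_support_subset_imp_eq:
  assumes "finite I'" "finite J'" "card I = card I'" "card J = card J'"
    and "minor_support (I, J) \<subseteq> minor_support (I', J')"
  shows "(I, J) = (I', J')"
proof -
  have "I \<subseteq> I'" "J \<subseteq> J'"
    using assms(5) unfolding minor_support_def by auto
  then show ?thesis
    using assms(1-4) card_subset_eq by auto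
qed

lemma all_pos_pair_iff_all_pos_sum:
  fixes r n :: nat and \<Phi> :: "(nat \<Rightarrow> 'a::{zero,ord}) \<Rightarrow> (nat \<Rightarrow> 'a) \<Rightarrow> bool"
  shows "(\<forall>k l. (\<forall>j<r. 0 < k j) \<longrightarrow> (\<forall>i<n. 0 < l i) \<longrightarrow> \<Phi> k l) \<longleftrightarrow>
   (\<forall>x. (\<forall>v\<in>Inl ` {0..<r} \<union> Inr ` {0..<n}. 0 < x v) \<longrightarrow> \<Phi> (\<lambda>j. x (Inl j)) (\<lambda>i. x (Inr i)))"
proof
  assume pairs: "\<forall>k l. (\<forall>j<r. 0 < k j) \<longrightarrow> (\<forall>i<n. 0 < l i) \<longrightarrow> \<Phi> k l"
  show "\<forall>x. (\<forall>v\<in>Inl ` {0..<r} \<union> Inr ` {0..<n}. 0 < x v) \<longrightarrow> \<Phi> (\<lambda>j. x (Inl j)) (\<lambda>i. x (Inr i))"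
  proof (intro allI impI)
    fix x :: "nat + nat \<Rightarrow> 'a" assume "\<forall>v\<in>Inl ` {0..<r} \<union> Inr ` {0..<n}. 0 < x v"
    then have "\<forall>j<r. 0 < x (Inl j)" "\<forall>i<n. 0 < x (Inr i)"
      by auto
    then show "\<Phi> (\<lambda>j. x (Inl j)) (\<lambda>i. x (Inr i))"
      using pairs by simp
  qed
next
  assume sums: "\<forall>x. (\<forall>v\<in>Inl ` {0..<r} \<union> Inr ` {0..<n}. 0 < x v) \<longrightarrow> \<Phi> (\<lambda>j. x (Inl j)) (\<lambda>i. x (Inr i))"
  show "\<forall>k l. (\<forall>j<r. 0 < k j) \<longrightarrow> (\<forall>i<n. 0 < l i) \<longrightarrow> \<Phi> k l"
  proof (intro allI impI)
    fix k l :: "nat \<Rightarrow> 'a" assume "\<forall>j<r. 0 < k j" "\<forall>i<n. 0 < l i"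
    then have "\<forall>v\<in>Inl ` {0..<r} \<union> Inr ` {0..<n}. 0 < case_sum k l v"
      by auto
    then show "\<Phi> k l"
      using sums[rule_format, of "case_sum k l"] by simp
  qed
qed

theorem mainTheorem14:
  fixes A B :: "real mat" and n r :: nat
  assumes A: "A \<in> carrier_mat n r" and B: "B \<in> carrier_mat r n"
  defines "s \<equiv> vec_space.rank n A"
  shows "(\<forall>\<kappa> \<in> pos_vecs r. injective_wrt n (f_kappa A B \<kappa>) (mat_image A))
     \<longleftrightarrow>
     ((\<forall>I J I' J'. I \<subseteq> {0..<n} \<and> J \<subseteq> {0..<r} \<and> card I = s \<and> card J = s \<and>
                   I' \<subseteq> {0..<n} \<and> J' \<subseteq> {0..<r} \<and> card I' = s \<and> card J' = s \<and>
                   det (submatrix A I J) * det (submatrix B J I) \<noteq> 0 \<and>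
                   det (submatrix A I' J') * det (submatrix B J' I') \<noteq> 0 \<longrightarrow>
                   sgn (det (submatrix A I J) * det (submatrix B J I)) =
                   sgn (det (submatrix A I' J') * det (submatrix B J' I'))) \<and>
      (\<exists>I J. I \<subseteq> {0..<n} \<and> J \<subseteq> {0..<r} \<and> card I = s \<and> card J = s \<and>
             det (submatrix A I J) * det (submatrix B J I) \<noteq> 0))"
    (is "_ \<longleftrightarrow> ?minors")
proof -
  obtain P Q E where P: "P \<in> carrier_mat n s" and Q: "Q \<in> carrier_mat s r" and E: "E \<in> carrier_mat r s"
    and APQ: "A = P * Q" and PAE: "P = A * E"
    and P_inj: "\<And>w. w \<in> carrier_vec s \<Longrightarrow> P *\<^sub>v w = 0\<^sub>v n \<Longrightarrow> w = 0\<^sub>v s"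
    by (rule vec_space.rank_factorization[OF A, folded s_def]) blast
  define T where "T = {I. I \<subseteq> {0..<n} \<and> card I = s} \<times> {J. J \<subseteq> {0..<r} \<and> card J = s}"
  define c where "c = (\<lambda>(I, J). det (submatrix A I J) * det (submatrix B J I))"
  have "(\<forall>\<kappa> \<in> pos_vecs r. injective_wrt n (f_kappa A B \<kappa>) (mat_image A)) \<longleftrightarrow>
      (\<forall>k l. (\<forall>j<r. 0 < k j) \<longrightarrow> (\<forall>i<n. 0 < l i) \<longrightarrow> det (Q * scaled_mat B k l * P) \<noteq> 0)"
    using injective_wrt_iff_scaled_kernel_trivial[OF A B] image_kernel_trivial_iff_det[OF A P Q E _ APQ PAE P_inj] B
    by simp
  also have "\<dots> \<longleftrightarrow> (\<forall>x. (\<forall>v\<in>Inl ` {0..<r} \<union> Inr ` {0..<n}. 0 < x v) \<longrightarrow>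
                      squarefree_poly T minor_support c x \<noteq> 0)"
    unfolding all_pos_pair_iff_all_pos_sum det_scaled_eq_squarefree_poly[OF B P Q APQ] T_def c_def ..
  also have "\<dots> \<longleftrightarrow> (\<forall>t\<in>T. \<forall>t'\<in>T. c t \<noteq> 0 \<and> c t' \<noteq> 0 \<longrightarrow> sgn (c t) = sgn (c t')) \<and> (\<exists>t\<in>T. c t \<noteq> 0)"
  proof (rule squarefree_poly_nonvanishing_iff)
    have fin: "finite I" if "I \<subseteq> {0..<m}" for I :: "nat set" and m
      using that by (rule finite_subset) simp
    have "T \<subseteq> Pow {0..<n} \<times> Pow {0..<r}"
      unfolding T_def by auto
    then show "finite T"
      by (rule finite_subset) simp
    show "finite (minor_support t) \<and> minor_support t \<subseteq> Inl ` {0..<r} \<union> Inr ` {0..<n}" if t: "t \<in> T" for t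
    proof -
      obtain I J where "t = (I, J)" "I \<subseteq> {0..<n}" "J \<subseteq> {0..<r}"
        using t unfolding T_def by blast
      then show ?thesis
        using fin[of I n] fin[of J r] unfolding minor_support_def by auto
    qed
    show "t = t'" if t: "t \<in> T" "t' \<in> T" and sub: "minor_support t \<subseteq> minor_support t'" for t t'
    proof -
      obtain I J I' J' where "t = (I, J)" "t' = (I', J')" "I' \<subseteq> {0..<n}" "J' \<subseteq> {0..<r}"
          "card I = card I'" "card J = card J'"
        using t unfolding T_def by auto
      then show ?thesis
        using minor_support_subset_imp_eq[OF fin fin] sub by simp
    qed
  qed
  also have "\<dots> \<longleftrightarrow> ?minors"
    unfolding T_def c_def Ball_def Bex_def
    by (simp only: split_paired_All split_paired_Ex mem_Times_iff mem_Collect_eq prod.case fst_conv snd_conv)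
      blast
  finally show ?thesis .
qed

end
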